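(* For $n\ge 2$, let $\mathfrak{C}_n$ be the set of trees on the vertex set $\{1,\dots,n\}$ and define $$G_n(x,y,z)=\sum_{t\in\mathfrak{C}_n}x^{\deg_1(t)}y^{\deg'_2(t)}z^{|L_1(t)|}.$$ Then $G_n(x,y,z)=G_n(y,x,z)$ for all $n\ge 2$.
   Context: $\deg_k(t)$ is the degree of vertex $k$ in $t$. For a tree $t$ with vertices labeled by distinct integers and a vertex $i$, consider the path of vertices $v_0=i,v_1,\dots,v_\ell$ defined by: for each $m\ge 0$, if $v_m$ has a neighbor with label larger than $v_m$, then $v_{m+1}$ is the neighbor of $v_m$ with the smallest label among those neighbors with label larger than $v_m$; otherwise the path stops at $v_m$. Then $L_i(t)=\{v_1,\dots,v_\ell\}$, and $\deg'_2(t)$ denotes the degree in $t$ of the last vertex $v_\ell$ of this path started at $i=1$. Equivalently, $G_n(x,y,z)=n^{n-2}\mathbb{E}[x^{\mathbb{T}_1}y^{\mathbb{T}_2}z^{\mathbb{M}_1}]$ for a uniform minimal factorization $(\tau_1,\dots,\tau_{n-1})$ of $(1~2\dots n)$ (i.e. $\tau_{n-1}\circ\dots\circ\tau_1=(1~2\dots n)$), where $\mathbb{T}_k$ is the number of transpositions containing $k$ and $\mathbb{M}_1$ is the number of transpositions that move the trajectory of $1$. *)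

theory Defs
  imports Main
begin

text \<open>A graph on vertices of type nat is given by its edge set: a set of 2-element sets.\<close>

definition adj :: "nat set set \<Rightarrow> (nat \<times> nat) set" where
  "adj E = {(u, v). {u, v} \<in> E}"

text \<open>A tree on vertex set V: every edge is a 2-subset of V, the graph is connected,
  and it is acyclic (no edge lies on a cycle, i.e. removing any edge {u,v}
  disconnects u from v).\<close>

definition is_tree :: "nat set \<Rightarrow> nat set set \<Rightarrow> bool" where
  "is_tree V E \<longleftrightarrow>
     (\<forall>e\<in>E. e \<subseteq> V \<and> card e = 2) \<and>
     (\<forall>u\<in>V. \<forall>v\<in>V. (u, v) \<in> (adj E)\<^sup>*) \<and>
     (\<forall>e\<in>E. \<forall>u v. e = {u, v} \<longrightarrow> (u, v) \<notin> (adj (E - {e}))\<^sup>*)"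

definition trees :: "nat \<Rightarrow> nat set set set" where
  "trees n = {E. is_tree {1..n} E}"

definition deg :: "nat set set \<Rightarrow> nat \<Rightarrow> nat" where
  "deg E k = card {e \<in> E. k \<in> e}"

definition larger_nbrs :: "nat set set \<Rightarrow> nat \<Rightarrow> nat set" where
  "larger_nbrs E v = {u. {v, u} \<in> E \<and> v < u}"

definition nxt :: "nat set set \<Rightarrow> nat \<Rightarrow> nat" where
  "nxt E v = (if larger_nbrs E v = {} then v else Min (larger_nbrs E v))"

definition Lpath :: "nat set set \<Rightarrow> nat \<Rightarrow> nat set" where
  "Lpath E i = {(nxt E ^^ m) i | m. 1 \<le> m \<and> (nxt E ^^ m) i \<noteq> (nxt E ^^ (m - 1)) i}"

text \<open>The last vertex v_l of the path from i: the path has strictly increasing labels,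
  so its last vertex is the maximum of {v_0,...,v_l}.\<close>

definition path_end :: "nat set set \<Rightarrow> nat \<Rightarrow> nat" where
  "path_end E i = Max (insert i (Lpath E i))"

definition deg' :: "nat set set \<Rightarrow> nat" where
  "deg' E = deg E (path_end E 1)"

definition G :: "nat \<Rightarrow> 'a::comm_semiring_1 \<Rightarrow> 'a \<Rightarrow> 'a \<Rightarrow> 'a" where
  "G n x y z = (\<Sum>t\<in>trees n. x ^ deg t 1 * y ^ deg' t * z ^ card (Lpath t 1))"

end

theory Submission
  imports Defs
begin

text \<open>Let 1 = a_0 < a_1 < ... < a_l be the greedy ascent from 1, whose vertices after a_0 form
  L_1, and put a_(l+1) = n + 1. The cuts a_j split {1..n} into the blocks [a_j, a_(j+1)). Relabel
  the vertices by reversing the order of the blocks while keeping the order inside each block. In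
  the relabelled tree the greedy ascent from 1 runs through the images of a_l, a_(l-1), ..., a_0:
  it has the same length, starts at the image 1 of a_l and ends at the image of 1, so the degrees
  of vertex 1 and of the end of the ascent are exchanged. The cuts of the relabelled tree are the
  reflected cuts n + 2 - a_(l+1-k), so relabelling again gives back the original tree. Summing over
  this involution of the trees exchanges x and y.\<close>

definition ascent :: "nat set set \<Rightarrow> nat \<Rightarrow> nat \<Rightarrow> nat" where
  "ascent E i m = (nxt E ^^ m) i"

definition ascent_length :: "nat set set \<Rightarrow> nat \<Rightarrow> nat" where
  "ascent_length E i = (LEAST m. nxt E (ascent E i m) = ascent E i m)"

lemma ascent_0 [simp]: "ascent E i 0 = i"
  by (simp add: ascent_def)

lemma ascent_Suc: "ascent E i (Suc m) = nxt E (ascent E i m)"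
  by (simp add: ascent_def)

locale graph_on =
  fixes V :: "nat set" and E :: "nat set set"
  assumes finite_vertices: "finite V"
    and edge_subset: "e \<in> E \<Longrightarrow> e \<subseteq> V"
begin

lemma larger_nbrs_subset: "larger_nbrs E v \<subseteq> V"
  using edge_subset by (auto simp: larger_nbrs_def)

lemma finite_larger_nbrs: "finite (larger_nbrs E v)"
  using finite_vertices larger_nbrs_subset by (rule finite_subset[rotated])

lemma nxt_least:
  assumes "larger_nbrs E v \<noteq> {}"
  shows "nxt E v \<in> larger_nbrs E v" and "u \<in> larger_nbrs E v \<Longrightarrow> nxt E v \<le> u"
  using assms finite_larger_nbrs by (simp_all add: nxt_def)

lemma nxt_ge: "v \<le> nxt E v"
  using nxt_least(1)[of v] by (cases "larger_nbrs E v = {}") (auto simp: nxt_def larger_nbrs_def)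

lemma nxt_in_vertices: "v \<in> V \<Longrightarrow> nxt E v \<in> V"
  using nxt_least(1)[of v] larger_nbrs_subset by (cases "larger_nbrs E v = {}") (auto simp: nxt_def)

lemma ascent_in_vertices: "i \<in> V \<Longrightarrow> ascent E i m \<in> V"
  by (induction m) (simp_all add: ascent_Suc nxt_in_vertices)

lemma ascent_less_Suc: "m < ascent_length E i \<Longrightarrow> ascent E i m < ascent E i (Suc m)"
  using not_less_Least[of m "\<lambda>m. nxt E (ascent E i m) = ascent E i m"] nxt_ge[of "ascent E i m"]
  by (simp add: ascent_length_def ascent_Suc)

lemma ascent_less: "k < j \<Longrightarrow> j \<le> ascent_length E i \<Longrightarrow> ascent E i k < ascent E i j"
proof (induction j)
  case (Suc j)
  then show ?case
    using ascent_less_Suc[of j i] by (cases "k = j") auto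
qed simp

lemma ascent_le: "k \<le> j \<Longrightarrow> j \<le> ascent_length E i \<Longrightarrow> ascent E i k \<le> ascent E i j"
  using ascent_less[of k j i] by (cases "k = j") auto

lemma ascent_step_least:
  assumes "m < ascent_length E i"
  shows "ascent E i (Suc m) \<in> larger_nbrs E (ascent E i m)"
    and "u \<in> larger_nbrs E (ascent E i m) \<Longrightarrow> ascent E i (Suc m) \<le> u"
proof -
  have "larger_nbrs E (ascent E i m) \<noteq> {}"
    using ascent_less_Suc[OF assms] by (auto simp: ascent_Suc nxt_def)
  then show "ascent E i (Suc m) \<in> larger_nbrs E (ascent E i m)"
    and "u \<in> larger_nbrs E (ascent E i m) \<Longrightarrow> ascent E i (Suc m) \<le> u"
    using nxt_least by (simp_all add: ascent_Suc)
qed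

context
  fixes i assumes start: "i \<in> V"
begin

lemma ascent_terminates: "\<exists>m. nxt E (ascent E i m) = ascent E i m"
proof (rule ccontr)
  assume moves: "\<nexists>m. nxt E (ascent E i m) = ascent E i m"
  have grows: "i + m \<le> ascent E i m" for m
  proof (induction m)
    case (Suc m)
    have "ascent E i m \<noteq> nxt E (ascent E i m)"
      using moves by metis
    with Suc nxt_ge[of "ascent E i m"] show ?case
      by (simp add: ascent_Suc)
  qed simp
  have "ascent E i (Suc (Max V)) \<le> Max V"
    using ascent_in_vertices[OF start] finite_vertices by simp
  with grows[of "Suc (Max V)"] show False
    by simp
qed

lemma nxt_ascent_length: "nxt E (ascent E i (ascent_length E i)) = ascent E i (ascent_length E i)"
  unfolding ascent_length_def using ascent_terminates by (rule LeastI_ex)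

lemma larger_nbrs_ascent_end: "larger_nbrs E (ascent E i (ascent_length E i)) = {}"
  using nxt_ascent_length nxt_least(1) by (fastforce simp: larger_nbrs_def)

lemma ascent_stays: "ascent_length E i \<le> m \<Longrightarrow> ascent E i m = ascent E i (ascent_length E i)"
proof (induction m)
  case (Suc m)
  then show ?case
    using nxt_ascent_length by (cases "ascent_length E i = Suc m") (simp_all add: ascent_Suc)
qed simp

lemma Lpath_eq_ascent: "Lpath E i = ascent E i ` {1..ascent_length E i}"
proof -
  have "Lpath E i = {ascent E i m | m. 1 \<le> m \<and> ascent E i m \<noteq> ascent E i (m - 1)}"
    by (simp add: Lpath_def ascent_def)
  also have "\<dots> = ascent E i ` {1..ascent_length E i}"
  proof (intro set_eqI iffI)
    fix x assume "x \<in> {ascent E i m | m. 1 \<le> m \<and> ascent E i m \<noteq> ascent E i (m - 1)}"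
    then obtain m where m: "x = ascent E i m" "1 \<le> m" "ascent E i m \<noteq> ascent E i (m - 1)"
      by blast
    then have "m \<le> ascent_length E i"
      using ascent_stays[of m] ascent_stays[of "m - 1"] by fastforce
    with m show "x \<in> ascent E i ` {1..ascent_length E i}"
      by auto
  next
    fix x assume "x \<in> ascent E i ` {1..ascent_length E i}"
    then obtain m where m: "x = ascent E i m" "1 \<le> m" "m \<le> ascent_length E i"
      by auto
    then have "ascent E i (m - 1) < ascent E i m"
      using ascent_less[of "m - 1" m] by simp
    with m show "x \<in> {ascent E i m | m. 1 \<le> m \<and> ascent E i m \<noteq> ascent E i (m - 1)}"
      by force
  qed
  finally show ?thesis .
qed

lemma card_Lpath: "card (Lpath E i) = ascent_length E i"
proof -
  have "inj_on (ascent E i) {1..ascent_length E i}"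
    by (intro inj_onI) (metis atLeastAtMost_iff linorder_neqE_nat order_less_irrefl ascent_less)
  then show ?thesis
    by (simp add: Lpath_eq_ascent card_image)
qed

lemma path_end_eq_ascent: "path_end E i = ascent E i (ascent_length E i)"
  unfolding path_end_def Lpath_eq_ascent
proof (rule Max_eqI)
  fix y assume "y \<in> insert i (ascent E i ` {1..ascent_length E i})"
  then show "y \<le> ascent E i (ascent_length E i)"
    using ascent_le[of 0 "ascent_length E i" i] ascent_le[of _ "ascent_length E i" i] by auto
next
  show "ascent E i (ascent_length E i) \<in> insert i (ascent E i ` {1..ascent_length E i})"
    by (cases "ascent_length E i") auto
qed simp

end

lemma ascent_eqI:
  assumes first: "q 0 = i"
    and step: "\<And>m. m < l \<Longrightarrow> q (Suc m) \<in> larger_nbrs E (q m)"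
    and least: "\<And>m u. m < l \<Longrightarrow> u \<in> larger_nbrs E (q m) \<Longrightarrow> q (Suc m) \<le> u"
    and stop: "larger_nbrs E (q l) = {}"
  shows "ascent_length E i = l" and "m \<le> l \<Longrightarrow> ascent E i m = q m"
proof -
  have nxt_q: "nxt E (q m) = q (Suc m)" if "m < l" for m
  proof -
    have "Min (larger_nbrs E (q m)) = q (Suc m)"
      using step[OF that] least[OF that] finite_larger_nbrs by (intro Min_eqI) auto
    then show ?thesis
      using step[OF that] by (auto simp: nxt_def)
  qed
  have ascent_q: "ascent E i m = q m" if "m \<le> l" for m
    using that by (induction m) (simp_all add: first ascent_Suc nxt_q)
  show "m \<le> l \<Longrightarrow> ascent E i m = q m"
    by (rule ascent_q)
  show "ascent_length E i = l"
    unfolding ascent_length_def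
  proof (rule Least_equality)
    show "nxt E (ascent E i l) = ascent E i l"
      using stop by (simp add: ascent_q nxt_def)
  next
    fix m assume fixed: "nxt E (ascent E i m) = ascent E i m"
    show "l \<le> m"
    proof (rule ccontr)
      assume "\<not> l \<le> m"
      then have "q m < q (Suc m)"
        using step[of m] by (simp add: larger_nbrs_def)
      with fixed \<open>\<not> l \<le> m\<close> show False
        by (simp add: ascent_q nxt_q)
    qed
  qed
qed

end

definition block :: "nat \<Rightarrow> (nat \<Rightarrow> nat) \<Rightarrow> nat \<Rightarrow> nat" where
  "block l c u = Max {j. j \<le> l \<and> c j \<le> u}"

text \<open>The block [c_b, c_(b+1)) containing u is moved onto [n + 2 - c_(b+1), n + 2 - c_b).\<close>

definition reverse_blocks :: "nat \<Rightarrow> nat \<Rightarrow> (nat \<Rightarrow> nat) \<Rightarrow> nat \<Rightarrow> nat" where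
  "reverse_blocks n l c u = n + 2 + u - c (block l c u) - c (Suc (block l c u))"

definition reflect_cuts :: "nat \<Rightarrow> nat \<Rightarrow> (nat \<Rightarrow> nat) \<Rightarrow> nat \<Rightarrow> nat" where
  "reflect_cuts n l c k = n + 2 - c (Suc l - k)"

locale block_cuts =
  fixes n l :: nat and c :: "nat \<Rightarrow> nat"
  assumes cut_less: "i < j \<Longrightarrow> j \<le> Suc l \<Longrightarrow> c i < c j"
    and first_cut: "c 0 = 1"
    and last_cut: "c (Suc l) = Suc n"
begin

lemma cut_le: "i \<le> j \<Longrightarrow> j \<le> Suc l \<Longrightarrow> c i \<le> c j"
  using cut_less[of i j] by (cases "i = j") auto

lemma cut_bounds: "j \<le> Suc l \<Longrightarrow> 1 \<le> c j \<and> c j \<le> Suc n"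
  using cut_le[of 0 j] cut_le[of j "Suc l"] by (simp add: first_cut last_cut)

lemma block_eqI:
  assumes "j \<le> l" and "c j \<le> u" and "u < c (Suc j)"
  shows "block l c u = j"
  unfolding block_def
proof (rule Max_eqI)
  fix k assume "k \<in> {j. j \<le> l \<and> c j \<le> u}"
  then show "k \<le> j"
    using assms cut_le[of "Suc j" k] by (cases "j < k") auto
qed (use assms in auto)

lemma block_bounds:
  assumes "u \<in> {1..n}"
  shows "block l c u \<le> l" and "c (block l c u) \<le> u" and "u < c (Suc (block l c u))"
proof -
  define S where "S = {j. j \<le> l \<and> c j \<le> u}"
  have "finite S" and "S \<noteq> {}" and "block l c u = Max S"
    using assms by (auto simp: S_def first_cut block_def)
  then have "block l c u \<in> S" and below: "\<And>j. j \<in> S \<Longrightarrow> j \<le> block l c u"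
    by simp_all
  then show "block l c u \<le> l" and "c (block l c u) \<le> u"
    by (auto simp: S_def)
  show "u < c (Suc (block l c u))"
  proof (cases "block l c u = l")
    case True
    then show ?thesis
      using assms by (simp add: last_cut)
  next
    case False
    with \<open>block l c u \<in> S\<close> below[of "Suc (block l c u)"] show ?thesis
      by (force simp: S_def)
  qed
qed

lemma reverse_blocks_eq:
  assumes "u \<in> {1..n}"
  shows "reverse_blocks n l c u = n + 2 - c (Suc (block l c u)) + (u - c (block l c u))"
  using block_bounds[OF assms] cut_bounds[of "Suc (block l c u)"]
  unfolding reverse_blocks_def by linarith

lemma reverse_blocks_cut: "j \<le> l \<Longrightarrow> reverse_blocks n l c (c j) = n + 2 - c (Suc j)"
  using block_eqI[of j "c j"] cut_less[of j "Suc j"] by (simp add: reverse_blocks_def)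

lemma reverse_blocks_bounds:
  assumes "u \<in> {1..n}"
  shows "n + 2 - c (Suc (block l c u)) \<le> reverse_blocks n l c u"
    and "reverse_blocks n l c u < n + 2 - c (block l c u)"
  using block_bounds[OF assms] cut_bounds[of "Suc (block l c u)"] reverse_blocks_eq[OF assms]
  by linarith+

lemma reverse_blocks_in_range:
  assumes "u \<in> {1..n}"
  shows "reverse_blocks n l c u \<in> {1..n}"
  using reverse_blocks_bounds[OF assms] block_bounds(1)[OF assms]
    cut_bounds[of "block l c u"] cut_bounds[of "Suc (block l c u)"] by auto

lemma reverse_blocks_antimono:
  assumes "u \<in> {1..n}" and "w \<in> {1..n}" and "block l c u < block l c w"
  shows "reverse_blocks n l c w < reverse_blocks n l c u"
proof -
  have "c (Suc (block l c u)) \<le> c (block l c w)"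
    using assms(3) block_bounds(1)[OF assms(2)] by (intro cut_le) auto
  then show ?thesis
    using reverse_blocks_bounds[OF assms(1)] reverse_blocks_bounds[OF assms(2)]
      cut_bounds[of "block l c w"] block_bounds(1)[OF assms(2)] by linarith
qed

lemma reverse_blocks_shift:
  assumes "u \<in> {1..n}" and "w \<in> {1..n}" and "block l c u = block l c w"
  shows "reverse_blocks n l c u + w = reverse_blocks n l c w + u"
  using reverse_blocks_eq[OF assms(1)] reverse_blocks_eq[OF assms(2)]
    block_bounds(2)[OF assms(1)] block_bounds(2)[OF assms(2)] assms(3) by simp

lemma inj_on_reverse_blocks: "inj_on (reverse_blocks n l c) {1..n}"
proof (rule inj_onI)
  fix u w assume u: "u \<in> {1..n}" and w: "w \<in> {1..n}"
    and eq: "reverse_blocks n l c u = reverse_blocks n l c w"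
  then have "block l c u = block l c w"
    using reverse_blocks_antimono[OF u w] reverse_blocks_antimono[OF w u] by fastforce
  then show "u = w"
    using reverse_blocks_shift[OF u w] eq by simp
qed

lemma reverse_blocks_image: "reverse_blocks n l c ` {1..n} = {1..n}"
  using inj_on_reverse_blocks reverse_blocks_in_range by (intro endo_inj_surj) auto

lemma block_cuts_reflect: "block_cuts n l (reflect_cuts n l c)"
proof
  show "reflect_cuts n l c i < reflect_cuts n l c j" if "i < j" and "j \<le> Suc l" for i j
  proof -
    have "c (Suc l - j) < c (Suc l - i)"
      using that by (intro cut_less) auto
    then show ?thesis
      using cut_bounds[of "Suc l - i"] by (simp add: reflect_cuts_def)
  qed
qed (simp_all add: reflect_cuts_def first_cut last_cut)

lemma reverse_blocks_reflect:
  assumes u: "u \<in> {1..n}"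
  shows "reverse_blocks n l (reflect_cuts n l c) (reverse_blocks n l c u) = u"
proof -
  define b where "b = block l c u"
  have b: "b \<le> l" "c b \<le> u" "u < c (Suc b)"
    using block_bounds[OF u] by (simp_all add: b_def)
  have lower: "reflect_cuts n l c (l - b) = n + 2 - c (Suc b)"
    and upper: "reflect_cuts n l c (Suc (l - b)) = n + 2 - c b"
    using b(1) by (simp_all add: reflect_cuts_def Suc_diff_le)
  have "block l (reflect_cuts n l c) (reverse_blocks n l c u) = l - b"
    using block_cuts.block_eqI[OF block_cuts_reflect, of "l - b"] lower upper
      reverse_blocks_bounds[OF u] by (simp add: b_def)
  then have "reverse_blocks n l (reflect_cuts n l c) (reverse_blocks n l c u)
      = n + 2 + reverse_blocks n l c u - (n + 2 - c (Suc b)) - (n + 2 - c b)"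
    by (simp add: reverse_blocks_def[of n l "reflect_cuts n l c"] lower upper)
  also have "\<dots> = u"
    using b cut_bounds[of "Suc b"] reverse_blocks_eq[OF u] by (simp add: b_def)
  finally show ?thesis .
qed

end

lemma image_edge: "{a, b} \<in> E \<Longrightarrow> {f a, f b} \<in> (`) f ` E"
  by (metis image_empty image_eqI image_insert)

lemma adj_image_rtrancl: "(a, b) \<in> (adj E)\<^sup>* \<Longrightarrow> (f a, f b) \<in> (adj ((`) f ` E))\<^sup>*"
proof (induction rule: rtrancl_induct)
  case (step b c)
  then have "{b, c} \<in> E"
    by (simp add: adj_def)
  then have "(f b, f c) \<in> adj ((`) f ` E)"
    by (simp add: adj_def image_edge)
  with step.IH show ?case
    by (rule rtrancl_into_rtrancl)
qed simp

lemma adj_mono: "E \<subseteq> F \<Longrightarrow> adj E \<subseteq> adj F"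
  by (auto simp: adj_def)

lemma is_treeD:
  assumes "is_tree V E"
  shows "e \<in> E \<Longrightarrow> e \<subseteq> V" and "e \<in> E \<Longrightarrow> card e = 2"
    and "u \<in> V \<Longrightarrow> v \<in> V \<Longrightarrow> (u, v) \<in> (adj E)\<^sup>*"
    and "e \<in> E \<Longrightarrow> e = {u, v} \<Longrightarrow> (u, v) \<notin> (adj (E - {e}))\<^sup>*"
  using assms unfolding is_tree_def by simp_all

lemma is_tree_image:
  assumes tree: "is_tree V E" and inj: "inj_on f V"
  shows "is_tree (f ` V) ((`) f ` E)"
proof -
  define g where "g = inv_into V f"
  note sub = is_treeD(1)[OF tree]
  have preimage: "(`) g ` (`) f ` F = F" if "F \<subseteq> E" for F
  proof -
    have "(`) g ` (`) f ` F = (\<lambda>e. g ` f ` e) ` F"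
      by (rule image_image)
    also have "\<dots> = (\<lambda>e. e) ` F"
      using that
      by (intro image_cong[OF refl]) (simp add: g_def inv_into_image_cancel[OF inj sub] subsetD)
    finally show ?thesis
      by simp
  qed
  show ?thesis
    unfolding is_tree_def
  proof (intro conjI ballI allI impI notI)
    fix e' assume "e' \<in> (`) f ` E"
    then obtain e where "e \<in> E" "e' = f ` e"
      by blast
    then show "e' \<subseteq> f ` V"
      using sub by blast
  next
    fix e' assume "e' \<in> (`) f ` E"
    then obtain e where "e \<in> E" "e' = f ` e"
      by blast
    then show "card e' = 2"
      using is_treeD(2)[OF tree] card_image[OF inj_on_subset[OF inj sub]] by simp
  next
    fix a b assume "a \<in> f ` V" and "b \<in> f ` V"
    then obtain u v where "a = f u" "b = f v" "u \<in> V" "v \<in> V"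
      by blast
    then show "(a, b) \<in> (adj ((`) f ` E))\<^sup>*"
      using is_treeD(3)[OF tree] adj_image_rtrancl by blast
  next
    fix e' a b
    assume "e' \<in> (`) f ` E" and "e' = {a, b}" and path: "(a, b) \<in> (adj ((`) f ` E - {e'}))\<^sup>*"
    then obtain e where e: "e \<in> E" "e' = f ` e"
      by blast
    have "e = g ` e'"
      using preimage[of "{e}"] e by simp
    with \<open>e' = {a, b}\<close> have e_ends: "e = {g a, g b}"
      by simp
    have "(`) f ` E - {e'} \<subseteq> (`) f ` (E - {e})"
      using e by blast
    with path have "(a, b) \<in> (adj ((`) f ` (E - {e})))\<^sup>*"
      using rtrancl_mono[OF adj_mono] by blast
    then have "(g a, g b) \<in> (adj ((`) g ` (`) f ` (E - {e})))\<^sup>*"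
      by (rule adj_image_rtrancl)
    then have "(g a, g b) \<in> (adj (E - {e}))\<^sup>*"
      using preimage[of "E - {e}"] by simp
    with is_treeD(4)[OF tree e(1) e_ends] show False
      by blast
  qed
qed

context graph_on
begin

lemma image_edge_iff:
  assumes "inj_on f V" and "x \<in> V" and "y \<in> V"
  shows "{f x, f y} \<in> (`) f ` E \<longleftrightarrow> {x, y} \<in> E"
proof
  assume "{f x, f y} \<in> (`) f ` E"
  then obtain e where e: "e \<in> E" and image_eq: "f ` e = f ` {x, y}"
    by auto
  have "{x, y} \<subseteq> V"
    using assms(2,3) by simp
  with image_eq have "e = {x, y}"
    using inj_on_image_eq_iff[OF assms(1) edge_subset[OF e]] by blast
  with e show "{x, y} \<in> E"
    by simp
next
qed (rule image_edge)

lemma deg_image: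
  assumes inj: "inj_on f V" and x: "x \<in> V"
  shows "deg ((`) f ` E) (f x) = deg E x"
proof -
  have "f x \<in> f ` e \<longleftrightarrow> x \<in> e" if "e \<in> E" for e
    using inj_on_image_mem_iff[OF inj x edge_subset[OF that]] .
  then have "{e' \<in> (`) f ` E. f x \<in> e'} = (`) f ` {e \<in> E. x \<in> e}"
    by blast
  moreover have "inj_on ((`) f) {e \<in> E. x \<in> e}"
    using inj edge_subset by (intro inj_onI) (metis inj_on_image_eq_iff mem_Collect_eq)
  ultimately show ?thesis
    by (simp add: deg_def card_image)
qed

end

definition ascent_cuts :: "nat \<Rightarrow> nat set set \<Rightarrow> nat \<Rightarrow> nat" where
  "ascent_cuts n E j = (if j \<le> ascent_length E 1 then ascent E 1 j else Suc n)"

definition block_reversal :: "nat \<Rightarrow> nat set set \<Rightarrow> nat \<Rightarrow> nat" where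
  "block_reversal n E = reverse_blocks n (ascent_length E 1) (ascent_cuts n E)"

definition block_reversed :: "nat \<Rightarrow> nat set set \<Rightarrow> nat set set" where
  "block_reversed n E = (`) (block_reversal n E) ` E"

locale interval_graph = graph_on "{1..n}" E for n :: nat and E +
  assumes one_le_n: "1 \<le> n"

lemma interval_graphI: "1 \<le> n \<Longrightarrow> (\<And>e. e \<in> E \<Longrightarrow> e \<subseteq> {1..n}) \<Longrightarrow> interval_graph n E"
  by (simp add: interval_graph_def graph_on_def interval_graph_axioms_def)

context interval_graph
begin

lemma one_in_vertices: "1 \<in> {1..n}"
  using one_le_n by simp

sublocale cuts: block_cuts n "ascent_length E 1" "ascent_cuts n E"
proof
  show "ascent_cuts n E i < ascent_cuts n E j" if "i < j" and "j \<le> Suc (ascent_length E 1)" for i j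
    using that ascent_less[of i j 1] ascent_in_vertices[OF one_in_vertices, of i]
    by (auto simp: ascent_cuts_def)
qed (simp_all add: ascent_cuts_def)

lemma ascent_cuts_ascent: "j \<le> ascent_length E 1 \<Longrightarrow> ascent_cuts n E j = ascent E 1 j"
  by (simp add: ascent_cuts_def)

lemma block_ascent:
  "j \<le> ascent_length E 1 \<Longrightarrow> block (ascent_length E 1) (ascent_cuts n E) (ascent E 1 j) = j"
  using cuts.block_eqI[of j] cuts.cut_less[of j "Suc j"] by (simp add: ascent_cuts_ascent)

lemma block_reversal_ascent:
  "j \<le> ascent_length E 1 \<Longrightarrow> block_reversal n E (ascent E 1 j) = n + 2 - ascent_cuts n E (Suc j)"
  using cuts.reverse_blocks_cut[of j] by (simp add: block_reversal_def ascent_cuts_ascent)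

lemma inj_on_block_reversal: "inj_on (block_reversal n E) {1..n}"
  unfolding block_reversal_def by (rule cuts.inj_on_reverse_blocks)

lemma block_reversal_image: "block_reversal n E ` {1..n} = {1..n}"
  unfolding block_reversal_def by (rule cuts.reverse_blocks_image)

lemma interval_graph_block_reversed: "interval_graph n (block_reversed n E)"
proof (rule interval_graphI[OF one_le_n])
  fix e' assume "e' \<in> block_reversed n E"
  then obtain e where "e \<in> E" and "e' = block_reversal n E ` e"
    by (auto simp: block_reversed_def)
  then show "e' \<subseteq> {1..n}"
    using edge_subset block_reversal_image by blast
qed

text \<open>A neighbour y of the ascent vertex a_j that becomes larger than a_j after the
  relabelling cannot lie in a later block (those are moved below a_j), nor in the block of a_j:
  there it would be a larger neighbour of a_j below a_(j+1), contradicting the choice of a_(j+1).\<close>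

lemma larger_nbr_earlier_block:
  assumes j: "j \<le> ascent_length E 1" and edge: "{ascent E 1 j, y} \<in> E"
    and larger: "block_reversal n E (ascent E 1 j) < block_reversal n E y"
  shows "block (ascent_length E 1) (ascent_cuts n E) y < j"
proof -
  let ?l = "ascent_length E 1" and ?a = "ascent E 1 j"
  have a: "?a \<in> {1..n}" and y: "y \<in> {1..n}"
    using ascent_in_vertices[OF one_in_vertices] edge_subset[OF edge] by auto
  have block_a: "block ?l (ascent_cuts n E) ?a = j"
    using block_ascent[OF j] .
  show ?thesis
  proof (rule ccontr)
    assume "\<not> block ?l (ascent_cuts n E) y < j"
    then consider "j < block ?l (ascent_cuts n E) y" | "block ?l (ascent_cuts n E) y = j"
      by linarith
    then show False
    proof cases
      case 1
      then show False
        using cuts.reverse_blocks_antimono[OF a y] larger block_a by (simp add: block_reversal_def)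
    next
      case 2
      then have "?a < y"
        using cuts.reverse_blocks_shift[OF a y] larger block_a by (simp add: block_reversal_def)
      with edge have y_larger: "y \<in> larger_nbrs E ?a"
        by (simp add: larger_nbrs_def)
      have "y < ascent_cuts n E (Suc j)"
        using cuts.block_bounds(3)[OF y] 2 by simp
      show False
      proof (cases "j < ?l")
        case True
        then show False
          using ascent_step_least(2)[OF True y_larger] \<open>y < ascent_cuts n E (Suc j)\<close>
          by (simp add: ascent_cuts_ascent)
      next
        case False
        then show False
          using j larger_nbrs_ascent_end[OF one_in_vertices] y_larger by simp
      qed
    qed
  qed
qed

lemma larger_nbrs_block_reversed:
  assumes j: "j \<le> ascent_length E 1"
    and u: "u \<in> larger_nbrs (block_reversed n E) (block_reversal n E (ascent E 1 j))"
  obtains y where "u = block_reversal n E y" and "y \<in> {1..n}"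
    and "block (ascent_length E 1) (ascent_cuts n E) y < j"
proof -
  let ?\<sigma> = "block_reversal n E" and ?a = "ascent E 1 j"
  have edge: "{?\<sigma> ?a, u} \<in> block_reversed n E" and larger: "?\<sigma> ?a < u"
    using u by (simp_all add: larger_nbrs_def)
  have "u \<in> {1..n}"
    using edge graph_on.edge_subset[OF interval_graph.axioms(1)[OF interval_graph_block_reversed]]
    by blast
  then obtain y where y: "y \<in> {1..n}" "u = ?\<sigma> y"
    using block_reversal_image by blast
  have "{?a, y} \<in> E"
    using edge y
      image_edge_iff[OF inj_on_block_reversal ascent_in_vertices[OF one_in_vertices] y(1)]
    by (simp add: block_reversed_def)
  then have "block (ascent_length E 1) (ascent_cuts n E) y < j"
    using larger_nbr_earlier_block[OF j] larger y(2) by simp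
  with y that show ?thesis
    by blast
qed

lemma block_reversal_ascent_edge:
  assumes j: "j < ascent_length E 1"
  shows "block_reversal n E (ascent E 1 j)
    \<in> larger_nbrs (block_reversed n E) (block_reversal n E (ascent E 1 (Suc j)))"
proof -
  let ?\<sigma> = "block_reversal n E" and ?c = "ascent_cuts n E"
  have "{ascent E 1 j, ascent E 1 (Suc j)} \<in> E"
    using ascent_step_least(1)[OF j] by (simp add: larger_nbrs_def)
  then have "{?\<sigma> (ascent E 1 (Suc j)), ?\<sigma> (ascent E 1 j)} \<in> block_reversed n E"
    unfolding block_reversed_def by (subst insert_commute) (rule image_edge)
  moreover have "?\<sigma> (ascent E 1 (Suc j)) = n + 2 - ?c (Suc (Suc j))"
    and "?\<sigma> (ascent E 1 j) = n + 2 - ?c (Suc j)"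
    using block_reversal_ascent[of "Suc j"] block_reversal_ascent[of j] j by simp_all
  then have "?\<sigma> (ascent E 1 (Suc j)) < ?\<sigma> (ascent E 1 j)"
    using cuts.cut_less[of "Suc j" "Suc (Suc j)"] cuts.cut_bounds[of "Suc (Suc j)"] j by linarith
  ultimately show ?thesis
    by (simp add: larger_nbrs_def)
qed

lemma block_reversal_ascent_least:
  assumes j: "j < ascent_length E 1"
    and u: "u \<in> larger_nbrs (block_reversed n E) (block_reversal n E (ascent E 1 (Suc j)))"
  shows "block_reversal n E (ascent E 1 j) \<le> u"
proof -
  let ?l = "ascent_length E 1" and ?c = "ascent_cuts n E"
  obtain y where y: "u = block_reversal n E y" "y \<in> {1..n}" and earlier: "block ?l ?c y < Suc j"
    using larger_nbrs_block_reversed[of "Suc j" u] j u by auto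
  have "?c (Suc (block ?l ?c y)) \<le> ?c (Suc j)"
    using earlier j by (intro cuts.cut_le) auto
  then show ?thesis
    using cuts.reverse_blocks_bounds(1)[OF y(2)] block_reversal_ascent[of j] j y(1)
    by (simp add: block_reversal_def)
qed

lemma ascent_block_reversed:
  shows "ascent_length (block_reversed n E) 1 = ascent_length E 1"
    and "m \<le> ascent_length E 1 \<Longrightarrow>
      ascent (block_reversed n E) 1 m = block_reversal n E (ascent E 1 (ascent_length E 1 - m))"
proof -
  let ?l = "ascent_length E 1" and ?\<sigma> = "block_reversal n E"
  interpret reversed: interval_graph n "block_reversed n E"
    by (rule interval_graph_block_reversed)
  define q where "q m = ?\<sigma> (ascent E 1 (?l - m))" for m
  have "q 0 = 1"
    using block_reversal_ascent[of ?l] cuts.last_cut by (simp add: q_def)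
  moreover have "q (Suc m) \<in> larger_nbrs (block_reversed n E) (q m)" if "m < ?l" for m
    using block_reversal_ascent_edge[of "?l - Suc m"] that by (simp add: q_def Suc_diff_Suc)
  moreover have "q (Suc m) \<le> u" if "m < ?l" and "u \<in> larger_nbrs (block_reversed n E) (q m)" for m u
    using block_reversal_ascent_least[of "?l - Suc m" u] that by (simp add: q_def Suc_diff_Suc)
  moreover have "larger_nbrs (block_reversed n E) (q ?l) = {}"
  proof (rule equals0I)
    fix u assume "u \<in> larger_nbrs (block_reversed n E) (q ?l)"
    then show False
      using larger_nbrs_block_reversed[of 0 u] by (simp add: q_def)
  qed
  ultimately show "ascent_length (block_reversed n E) 1 = ?l"
    and "m \<le> ?l \<Longrightarrow> ascent (block_reversed n E) 1 m = ?\<sigma> (ascent E 1 (?l - m))"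
    using reversed.ascent_eqI[of q 1 ?l] by (simp_all add: q_def)
qed

lemma ascent_cuts_block_reversed:
  "ascent_cuts n (block_reversed n E) = reflect_cuts n (ascent_length E 1) (ascent_cuts n E)"
proof
  fix k
  show "ascent_cuts n (block_reversed n E) k
    = reflect_cuts n (ascent_length E 1) (ascent_cuts n E) k"
  proof (cases "k \<le> ascent_length E 1")
    case True
    then show ?thesis
      using ascent_block_reversed block_reversal_ascent[of "ascent_length E 1 - k"]
      by (simp add: ascent_cuts_def reflect_cuts_def Suc_diff_le)
  next
    case False
    then show ?thesis
      using ascent_block_reversed(1) cuts.first_cut by (simp add: ascent_cuts_def reflect_cuts_def)
  qed
qed

lemma block_reversal_block_reversed:
  "u \<in> {1..n} \<Longrightarrow> block_reversal n (block_reversed n E) (block_reversal n E u) = u"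
  using cuts.reverse_blocks_reflect ascent_block_reversed(1) ascent_cuts_block_reversed
  by (simp add: block_reversal_def)

lemma block_reversed_involution: "block_reversed n (block_reversed n E) = E"
proof -
  have "block_reversal n (block_reversed n E) ` block_reversal n E ` e = e" if "e \<in> E" for e
    using edge_subset[OF that] block_reversal_block_reversed by (force simp: image_image)
  then show ?thesis
    by (simp add: block_reversed_def image_image)
qed

lemma block_reversed_statistics:
  shows "deg (block_reversed n E) 1 = deg' E"
    and "deg' (block_reversed n E) = deg E 1"
    and "card (Lpath (block_reversed n E) 1) = card (Lpath E 1)"
proof -
  interpret reversed: interval_graph n "block_reversed n E"
    by (rule interval_graph_block_reversed)
  let ?l = "ascent_length E 1"
  have deg_image: "deg (block_reversed n E) (block_reversal n E x) = deg E x" if "x \<in> {1..n}" for x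
    unfolding block_reversed_def using inj_on_block_reversal that by (rule deg_image)
  have "block_reversal n E (ascent E 1 ?l) = 1"
    using block_reversal_ascent[of ?l] cuts.last_cut by simp
  then have "deg (block_reversed n E) 1
      = deg (block_reversed n E) (block_reversal n E (ascent E 1 ?l))"
    by simp
  also have "\<dots> = deg' E"
    unfolding deg'_def path_end_eq_ascent[OF one_in_vertices]
    using ascent_in_vertices[OF one_in_vertices] by (rule deg_image)
  finally show "deg (block_reversed n E) 1 = deg' E" .
  have "path_end (block_reversed n E) 1 = block_reversal n E 1"
    using ascent_block_reversed reversed.path_end_eq_ascent[OF one_in_vertices] by simp
  then show "deg' (block_reversed n E) = deg E 1"
    using deg_image[OF one_in_vertices] by (simp add: deg'_def)
  show "card (Lpath (block_reversed n E) 1) = card (Lpath E 1)"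
    using ascent_block_reversed(1) card_Lpath[OF one_in_vertices]
      reversed.card_Lpath[OF one_in_vertices] by simp
qed

lemma is_tree_block_reversed: "is_tree {1..n} E \<Longrightarrow> is_tree {1..n} (block_reversed n E)"
  using is_tree_image[OF _ inj_on_block_reversal] block_reversal_image
  by (simp add: block_reversed_def)

end

theorem proposition4p1:
  fixes x y z :: "'a::comm_semiring_1"
  assumes "n \<ge> 2"
  shows "G n x y z = G n y x z"
proof -
  have graph: "interval_graph n t" if "t \<in> trees n" for t
    using that assms is_treeD(1) by (intro interval_graphI) (auto simp: trees_def)
  have involution: "block_reversed n (block_reversed n t) = t" if "t \<in> trees n" for t
    using interval_graph.block_reversed_involution[OF graph[OF that]] .
  have closed: "block_reversed n t \<in> trees n" if "t \<in> trees n" for t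
    using that interval_graph.is_tree_block_reversed[OF graph[OF that]] by (simp add: trees_def)
  note statistics = interval_graph.block_reversed_statistics[OF graph]
  show ?thesis
    unfolding G_def
  proof (rule sum.reindex_bij_witness[of _ "block_reversed n" "block_reversed n"])
    fix t assume t: "t \<in> trees n"
    show "y ^ deg (block_reversed n t) 1 * x ^ deg' (block_reversed n t)
        * z ^ card (Lpath (block_reversed n t) 1)
      = x ^ deg t 1 * y ^ deg' t * z ^ card (Lpath t 1)"
      unfolding statistics[OF t] by (simp only: mult.commute)
  qed (simp_all add: involution closed)
qed

end
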